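(* Assume $\overline{c}>p$. Then $\lim_{c\to p^+}V(x,c)=V(x,p)$ for every $x>0$.
   Context: Cramér–Lundberg model: the uncontrolled surplus is $X_t=x+pt-\sum_{i=1}^{N_t}U_i$, where $x\ge0$ is the initial surplus, $p>0$ the premium rate, $N_t$ a Poisson process with intensity $\beta>0$, and the claims $U_i$ are i.i.d. positive random variables, independent of $N$, with continuous distribution function $F$; the safety loading condition $p>\beta\mathbb{E}[U_1]$ holds. Standing assumption (A1): $F$ is globally Lipschitz, i.e. $0\le F(y)-F(x)\le K(y-x)$ for $x<y$, for some $K>0$. Let $(\mathcal{F}_t)$ be the completed filtration generated by $X$. Fix $\overline{c}>0$ and a discount rate $q>0$. For $x\ge0$, $c\in[0,\overline{c}]$, $\Pi_{x,c,\overline{c}}$ is the set of càdlàg, adapted, non-decreasing processes $C=(C_t)$ with $c\le C_t\le\overline{c}$ for all $t$. Controlled surplus $X^C_t=X_t-\int_0^tC_sds$ ($X_0=x$), ruin time $\tau=\inf\{t\ge0:X^C_t<0\}$, $J(x;C)=\mathbb{E}[\int_0^\tau e^{-qs}C_sds]$, $V(x,c)=\sup_{C\in\Pi_{x,c,\overline{c}}}J(x;C)$. Convention: only strategies are considered such that if $C_{t^-}=p$ and $X^C_t=0$ for some $t>0$ then $C_s=p$ for $s\ge t$ until ruin; and the only strategy considered in $\Pi_{0,p,\overline{c}}$ is to pay at rate $p$ until the first claim arrival (so $V(0,p)=p/(q+\beta)$). *)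

theory Defs
  imports "HOL-Probability.Probability"
begin

text \<open>Cramer-Lundberg model. The Poisson process N of intensity beta is built from
  i.i.d. exponential(beta) inter-arrival times E n; claims are U n.\<close>

definition arrival :: "(nat \<Rightarrow> 'a \<Rightarrow> real) \<Rightarrow> nat \<Rightarrow> 'a \<Rightarrow> real" where
  "arrival E n \<omega> = (\<Sum>i\<le>n. E i \<omega>)"

definition Npois :: "(nat \<Rightarrow> 'a \<Rightarrow> real) \<Rightarrow> real \<Rightarrow> 'a \<Rightarrow> nat" where
  "Npois E t \<omega> = card {n. arrival E n \<omega> \<le> t}"

definition surplus :: "(nat \<Rightarrow> 'a \<Rightarrow> real) \<Rightarrow> (nat \<Rightarrow> 'a \<Rightarrow> real) \<Rightarrow> real \<Rightarrow> real \<Rightarrow> real \<Rightarrow> 'a \<Rightarrow> real" where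
  "surplus E U p x t \<omega> = x + p * t - (\<Sum>i<Npois E t \<omega>. U i \<omega>)"

definition cramer_lundberg ::
  "'a measure \<Rightarrow> real \<Rightarrow> real \<Rightarrow> (real \<Rightarrow> real) \<Rightarrow> (nat \<Rightarrow> 'a \<Rightarrow> real) \<Rightarrow> (nat \<Rightarrow> 'a \<Rightarrow> real) \<Rightarrow> bool" where
  "cramer_lundberg M \<beta> p F E U \<longleftrightarrow>
     prob_space M \<and> 0 < \<beta> \<and> 0 < p \<and>
     (\<forall>n. distributed M lborel (E n) (exponential_density \<beta>)) \<and>
     (\<forall>n. U n \<in> borel_measurable M) \<and>
     (\<forall>n. \<forall>y. measure M {\<omega> \<in> space M. U n \<omega> \<le> y} = F y) \<and>
     (\<forall>n. AE \<omega> in M. 0 < U n \<omega>) \<and>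
     prob_space.indep_vars M (\<lambda>_. borel) (\<lambda>i. case i of Inl n \<Rightarrow> E n | Inr n \<Rightarrow> U n) UNIV \<and>
     continuous_on UNIV F \<and>
     (\<exists>K>0. \<forall>a b. a < b \<longrightarrow> 0 \<le> F b - F a \<and> F b - F a \<le> K * (b - a)) \<and>
     ennreal \<beta> * (\<integral>\<^sup>+ \<omega>. ennreal (U 0 \<omega>) \<partial>M) < ennreal p"

definition nat_filt :: "'a measure \<Rightarrow> (real \<Rightarrow> 'a \<Rightarrow> real) \<Rightarrow> real \<Rightarrow> 'a set set" where
  "nat_filt M X t = sigma_sets (space M)
     {X s -` B \<inter> space M | s B. 0 \<le> s \<and> s \<le> t \<and> B \<in> sets borel}"

definition completed_filt :: "'a measure \<Rightarrow> (real \<Rightarrow> 'a \<Rightarrow> real) \<Rightarrow> real \<Rightarrow> 'a set set" where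
  "completed_filt M X t = {A. A \<subseteq> space M \<and>
     (\<exists>B\<in>nat_filt M X t. \<exists>N\<in>null_sets M. (A - B) \<union> (B - A) \<subseteq> N)}"

definition controlled :: "(nat \<Rightarrow> 'a \<Rightarrow> real) \<Rightarrow> (nat \<Rightarrow> 'a \<Rightarrow> real) \<Rightarrow> real \<Rightarrow> real
    \<Rightarrow> (real \<Rightarrow> 'a \<Rightarrow> real) \<Rightarrow> real \<Rightarrow> 'a \<Rightarrow> real" where
  "controlled E U p x C t \<omega> = surplus E U p x t \<omega> - integral {0..t} (\<lambda>s. C s \<omega>)"

text \<open>Ruin time (value \<infinity> if no ruin).\<close>
definition ruin_time :: "(nat \<Rightarrow> 'a \<Rightarrow> real) \<Rightarrow> (nat \<Rightarrow> 'a \<Rightarrow> real) \<Rightarrow> real \<Rightarrow> real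
    \<Rightarrow> (real \<Rightarrow> 'a \<Rightarrow> real) \<Rightarrow> 'a \<Rightarrow> ereal" where
  "ruin_time E U p x C \<omega> = Inf (ereal ` {t. 0 \<le> t \<and> controlled E U p x C t \<omega> < 0})"

definition admissible ::
  "'a measure \<Rightarrow> (nat \<Rightarrow> 'a \<Rightarrow> real) \<Rightarrow> (nat \<Rightarrow> 'a \<Rightarrow> real) \<Rightarrow> real \<Rightarrow> real \<Rightarrow> real \<Rightarrow> real
    \<Rightarrow> (real \<Rightarrow> 'a \<Rightarrow> real) set" where
  "admissible M E U p cbar x c =
     (if x = 0 \<and> c = p then {\<lambda>t \<omega>. p}
      else {C. (\<forall>t\<ge>0. \<forall>B\<in>sets borel.
                  C t -` B \<inter> space M \<in> completed_filt M (surplus E U p x) t) \<and>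
               (\<forall>\<omega>\<in>space M.
                  mono_on {0..} (\<lambda>t. C t \<omega>) \<and>
                  (\<forall>t\<ge>0. continuous (at_right t) (\<lambda>s. C s \<omega>)) \<and>
                  (\<forall>t>0. \<exists>l. ((\<lambda>s. C s \<omega>) \<longlongrightarrow> l) (at_left t)) \<and>
                  (\<forall>t\<ge>0. c \<le> C t \<omega> \<and> C t \<omega> \<le> cbar) \<and>
                  (\<forall>t>0. ((\<lambda>s. C s \<omega>) \<longlongrightarrow> p) (at_left t) \<and>
                         controlled E U p x C t \<omega> = 0 \<longrightarrow>
                         (\<forall>s. t \<le> s \<and> ereal s < ruin_time E U p x C \<omega> \<longrightarrow> C s \<omega> = p)))})"

definition Jval ::
  "'a measure \<Rightarrow> (nat \<Rightarrow> 'a \<Rightarrow> real) \<Rightarrow> (nat \<Rightarrow> 'a \<Rightarrow> real) \<Rightarrow> real \<Rightarrow> real \<Rightarrow> real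
    \<Rightarrow> (real \<Rightarrow> 'a \<Rightarrow> real) \<Rightarrow> real" where
  "Jval M E U p q x C = enn2real (\<integral>\<^sup>+ \<omega>. (\<integral>\<^sup>+ s.
      ennreal (indicator {s. 0 \<le> s \<and> ereal s < ruin_time E U p x C \<omega>} s * exp (- q * s) * C s \<omega>)
      \<partial>lborel) \<partial>M)"

definition Vval ::
  "'a measure \<Rightarrow> (nat \<Rightarrow> 'a \<Rightarrow> real) \<Rightarrow> (nat \<Rightarrow> 'a \<Rightarrow> real) \<Rightarrow> real \<Rightarrow> real \<Rightarrow> real
    \<Rightarrow> real \<Rightarrow> real \<Rightarrow> real" where
  "Vval M E U p q cbar x c = (SUP C \<in> admissible M E U p cbar x c. Jval M E U p q x C)"

end

theory Submission
  imports Defs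
begin

(* Raising the minimal rate from p to c > p shrinks the admissible set, so V(x,c) <= V(x,p).
   Conversely, a strategy C admissible at level p is replaced by max(C, c), which is admissible at
   level c. Paying faster only brings ruin earlier, and by little: if ruin under max(C, c) happens
   before a horizon T, then ruin under C follows within a delay \<delta>, unless one of the first n
   claims is small, the n-th claim arrives before T + \<delta>, or a partial claim sum falls into a
   window of width O(c - p) below x. The arrival event has Erlang probability, small for large n;
   the claim events have probability O(c - p), because the Lipschitz continuity of F passes to the
   laws of the partial sums by convolution. The dividends lost are at most
   cbar max(e^(-qT)/q, \<delta>) on the good event and cbar/q on the bad one, so
   J(x; C) <= J(x; max(C, c)) + \<epsilon> uniformly in C for c close to p. *)

lemma mono_on_max_const:
  "mono_on S f \<Longrightarrow> mono_on S (\<lambda>s. max (f s) (c::'b::linorder))"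
  unfolding mono_on_def by (meson max.mono order_refl)

lemma integral_mono_on_bounds:
  fixes f :: "real \<Rightarrow> real"
  assumes mono: "mono_on {a..b} f" and "a \<le> b"
  shows "(b - a) * f a \<le> integral {a..b} f" and "integral {a..b} f \<le> (b - a) * f b"
proof -
  have int: "f integrable_on {a..b}" by (rule integrable_on_mono_on[OF mono])
  have "integral {a..b} (\<lambda>_. f a) \<le> integral {a..b} f"
    by (rule integral_le) (use assms in \<open>auto intro: mono_onD int\<close>)
  then show "(b - a) * f a \<le> integral {a..b} f" using \<open>a \<le> b\<close> by simp
  have "integral {a..b} f \<le> integral {a..b} (\<lambda>_. f b)"
    by (rule integral_le) (use assms in \<open>auto intro: mono_onD int\<close>)
  then show "integral {a..b} f \<le> (b - a) * f b" using \<open>a \<le> b\<close> by (simp add: mult.commute)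
qed

lemma integral_max_const_le:
  fixes f :: "real \<Rightarrow> real"
  assumes mono: "mono_on {0..t} f" and ge: "\<And>s. s \<in> {0..t} \<Longrightarrow> p \<le> f s"
    and "p \<le> c" "0 \<le> t"
  shows "integral {0..t} (\<lambda>s. max (f s) c) \<le> integral {0..t} f + (c - p) * t"
proof -
  have int: "f integrable_on {0..t}" "(\<lambda>s. max (f s) c) integrable_on {0..t}"
    using mono mono_on_max_const[OF mono] by (auto intro: integrable_on_mono_on)
  have "integral {0..t} (\<lambda>s. max (f s) c) \<le> integral {0..t} (\<lambda>s. f s + (c - p))"
    by (rule integral_le) (use int ge \<open>p \<le> c\<close> in \<open>auto simp: max_def intro: integrable_add\<close>)
  also have "\<dots> = integral {0..t} f + (c - p) * t"
    using int \<open>0 \<le> t\<close> by (subst integral_add) (auto simp: mult.commute)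
  finally show ?thesis .
qed

definition first_negative :: "(real \<Rightarrow> real) \<Rightarrow> ereal" where
  "first_negative X = Inf (ereal ` {t. 0 \<le> t \<and> X t < 0})"

lemma first_negative_le: "0 \<le> t \<Longrightarrow> X t < 0 \<Longrightarrow> first_negative X \<le> ereal t"
  unfolding first_negative_def by (rule INF_lower) simp

lemma first_negative_finite_approx:
  assumes "first_negative X \<le> ereal T" and "0 < e"
  obtains r t where "first_negative X = ereal r" "0 \<le> r" "r \<le> T" "r \<le> t" "t < r + e" "X t < 0"
proof -
  have "0 \<le> first_negative X" unfolding first_negative_def by (rule Inf_greatest) auto
  then obtain r where r: "first_negative X = ereal r" using assms(1)
    by (cases "first_negative X") auto
  have "Inf (ereal ` {t. 0 \<le> t \<and> X t < 0}) < ereal (r + e)"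
    using r assms(2) by (simp add: first_negative_def)
  then obtain t where t: "0 \<le> t" "X t < 0" "t < r + e" by (auto simp: Inf_less_iff)
  have "r \<le> t" using first_negative_le[of t X] t r by simp
  then show ?thesis using that r t \<open>0 \<le> first_negative X\<close> assms(1) by simp
qed

definition risk_path ::
  "real \<Rightarrow> real \<Rightarrow> (real \<Rightarrow> nat) \<Rightarrow> (nat \<Rightarrow> real) \<Rightarrow> (real \<Rightarrow> real) \<Rightarrow> real \<Rightarrow> real" where
  "risk_path x p N u r t = x + p * t - (\<Sum>i<N t. u i) - integral {0..t} r"

lemma ruin_time_eq_first_negative:
  "ruin_time E U p x C \<omega> = first_negative (risk_path x p (\<lambda>t. Npois E t \<omega>) (\<lambda>i. U i \<omega>) (\<lambda>s. C s \<omega>))"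
  by (simp add: ruin_time_def first_negative_def controlled_def surplus_def risk_path_def)

lemma risk_path_split:
  assumes "0 \<le> t0" "t0 \<le> t1" "N t0 \<le> N t1" "r integrable_on {0..t1}"
  shows "risk_path x p N u r t1
    = risk_path x p N u r t0 + p * (t1 - t0) - (\<Sum>i\<in>{N t0..<N t1}. u i) - integral {t0..t1} r"
proof -
  have "integral {0..t1} r = integral {0..t0} r + integral {t0..t1} r"
    using Henstock_Kurzweil_Integration.integral_combine[of 0 t0 t1 r] assms by simp
  moreover have "(\<Sum>i<N t1. u i) = (\<Sum>i<N t0. u i) + (\<Sum>i\<in>{N t0..<N t1}. u i)"
    using assms(3) by (simp add: lessThan_atLeast0 sum.atLeastLessThan_concat)
  ultimately show ?thesis by (simp add: risk_path_def algebra_simps)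
qed

lemma risk_path_increment_le:
  assumes mono: "mono_on {0..t1} r" and "0 \<le> t0" "t0 \<le> t1" "N t0 \<le> N t1"
  shows "risk_path x p N u r t1
    \<le> risk_path x p N u r t0 - (\<Sum>i\<in>{N t0..<N t1}. u i) - (t1 - t0) * (r t0 - p)"
proof -
  have "(t1 - t0) * r t0 \<le> integral {t0..t1} r"
    using integral_mono_on_bounds(1)[OF mono_on_subset[OF mono] \<open>t0 \<le> t1\<close>] \<open>0 \<le> t0\<close> by auto
  then show ?thesis
    using risk_path_split[OF assms(2-4) integrable_on_mono_on[OF mono], of x p u]
    by (simp add: algebra_simps)
qed

lemma risk_path_rate_bounds:
  assumes "mono_on {0..t} r" "0 \<le> t"
  shows "x - (\<Sum>i<N t. u i) - t * (r t - p) \<le> risk_path x p N u r t"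
    and "risk_path x p N u r t \<le> x - (\<Sum>i<N t. u i) - t * (r 0 - p)"
  using integral_mono_on_bounds[OF assms] by (simp_all add: risk_path_def algebra_simps)

lemma risk_path_le_raised:
  assumes "mono_on {0..t} r" "\<And>s. s \<in> {0..t} \<Longrightarrow> p \<le> r s" "p \<le> c" "0 \<le> t"
  shows "risk_path x p N u r t \<le> risk_path x p N u (\<lambda>s. max (r s) c) t + (c - p) * t"
  using integral_max_const_le[OF assms] by (simp add: risk_path_def)

lemma risk_path_claim_sum_window:
  fixes \<eta> :: real
  assumes mono: "mono_on {0..t} r" and "p \<le> r 0" "0 \<le> t" "t \<le> h" "0 < \<delta>"
    and "0 \<le> risk_path x p N u r t" "risk_path x p N u r t < \<eta>" and rate: "(\<delta> / 2) * (r t - p) < \<eta>"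
  shows "x - \<eta> * (1 + 2 * h / \<delta>) < (\<Sum>i<N t. u i)" and "(\<Sum>i<N t. u i) \<le> x"
proof -
  have "0 \<le> r t - p" using mono_onD[OF mono, of 0 t] \<open>p \<le> r 0\<close> \<open>0 \<le> t\<close> by simp
  moreover have "r t - p \<le> 2 * \<eta> / \<delta>" using rate \<open>0 < \<delta>\<close> by (simp add: field_simps)
  ultimately have "t * (r t - p) \<le> h * (2 * \<eta> / \<delta>)"
    using \<open>0 \<le> t\<close> \<open>t \<le> h\<close> by (intro mult_mono) auto
  then have "x - (\<Sum>i<N t. u i) < \<eta> + h * (2 * \<eta> / \<delta>)"
    using risk_path_rate_bounds(1)[OF mono \<open>0 \<le> t\<close>, where x = x and N = N and u = u and p = p]
      \<open>risk_path x p N u r t < \<eta>\<close> by linarith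
  also have "\<dots> = \<eta> * (1 + 2 * h / \<delta>)" by (simp add: field_simps)
  finally show "x - \<eta> * (1 + 2 * h / \<delta>) < (\<Sum>i<N t. u i)" by simp
  have "0 \<le> t * (r 0 - p)" using \<open>p \<le> r 0\<close> \<open>0 \<le> t\<close> by simp
  then show "(\<Sum>i<N t. u i) \<le> x"
    using risk_path_rate_bounds(2)[OF mono \<open>0 \<le> t\<close>, where x = x and N = N and u = u and p = p]
      \<open>0 \<le> risk_path x p N u r t\<close> by linarith
qed

(* If the raised path X' is negative at t0 while X stays nonnegative up to t0 + \<delta>/2, then
   X t0 < (c - p) h. A claim in (t0, t0 + \<delta>/2] would exceed this bound, so there is none; then
   the rate at t0 is below p + 2 (c - p) h / \<delta>, and the claims paid before t0 add up to a value
   in (x - (c - p) h (1 + 2 h / \<delta>), x], which the hypothesis gap excludes. *)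
lemma raised_risk_path_neg_imp_neg:
  fixes x p c :: real and r :: "real \<Rightarrow> real" and N :: "real \<Rightarrow> nat" and u :: "nat \<Rightarrow> real"
  defines "X \<equiv> risk_path x p N u r" and "X' \<equiv> risk_path x p N u (\<lambda>s. max (r s) c)"
  assumes mono: "mono_on {0..} r" and ge: "\<And>t. 0 \<le> t \<Longrightarrow> p \<le> r t" and "p < c"
    and N_mono: "\<And>s t. 0 \<le> s \<Longrightarrow> s \<le> t \<Longrightarrow> t \<le> h \<Longrightarrow> N s \<le> N t"
    and N_le: "\<And>t. 0 \<le> t \<Longrightarrow> t \<le> h \<Longrightarrow> N t \<le> n"
    and large: "\<And>i. i < n \<Longrightarrow> (c - p) * h \<le> u i"
    and gap: "\<And>k. 1 \<le> k \<Longrightarrow> k \<le> n \<Longrightarrow>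
                \<not> (x - (c - p) * h * (1 + 2 * h / \<delta>) < (\<Sum>i<k. u i) \<and> (\<Sum>i<k. u i) \<le> x)"
    and x: "(c - p) * h * (1 + 2 * h / \<delta>) \<le> x"
    and "0 < \<delta>" "0 \<le> t0" "t0 + \<delta> / 2 \<le> h" and neg: "X' t0 < 0"
  shows "\<exists>t\<in>{0..t0 + \<delta> / 2}. X t < 0"
proof (rule ccontr)
  define t1 where "t1 = t0 + \<delta> / 2"
  define \<eta> where "\<eta> = (c - p) * h"
  assume "\<not> ?thesis"
  then have nonneg: "0 \<le> X t" if "0 \<le> t" "t \<le> t1" for t
    using that by (auto simp: t1_def not_less)
  have "0 \<le> t1" "t0 \<le> t1" "t0 \<le> h" "t1 \<le> h" "0 \<le> \<eta>"
    using \<open>0 < \<delta>\<close> \<open>0 \<le> t0\<close> \<open>t0 + \<delta> / 2 \<le> h\<close> \<open>p < c\<close> by (auto simp: t1_def \<eta>_def)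
  have mono_on_interval: "mono_on {0..b} r" for b
    using mono_on_subset[OF mono] by auto
  have "X t0 \<le> X' t0 + (c - p) * t0"
    unfolding X_def X'_def using ge \<open>p < c\<close> \<open>0 \<le> t0\<close> by (intro risk_path_le_raised mono_on_interval) auto
  also have "(c - p) * t0 \<le> \<eta>" using \<open>p < c\<close> \<open>t0 \<le> h\<close> by (simp add: \<eta>_def)
  finally have X_t0: "X t0 < \<eta>" using neg by simp
  have "N t0 \<le> N t1" "N t1 \<le> n" using N_mono N_le \<open>0 \<le> t0\<close> \<open>t0 \<le> t1\<close> \<open>t1 \<le> h\<close> by auto
  have X_t1: "X t1 \<le> X t0 - (\<Sum>i\<in>{N t0..<N t1}. u i) - (\<delta> / 2) * (r t0 - p)"
    unfolding X_def using risk_path_increment_le[OF mono_on_interval \<open>0 \<le> t0\<close> \<open>t0 \<le> t1\<close> \<open>N t0 \<le> N t1\<close>]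
    by (simp add: t1_def)
  have "0 \<le> (\<delta> / 2) * (r t0 - p)" using ge \<open>0 \<le> t0\<close> \<open>0 < \<delta>\<close> by simp
  show False
  proof (cases "N t0 < N t1")
    case True
    then have "\<eta> \<le> u (N t0)" using large \<open>N t1 \<le> n\<close> by (simp add: \<eta>_def)
    also have "u (N t0) \<le> (\<Sum>i\<in>{N t0..<N t1}. u i)"
      using True large \<open>N t1 \<le> n\<close> \<open>0 \<le> \<eta>\<close> by (intro member_le_sum) (auto simp: \<eta>_def intro: order_trans)
    finally have "X t1 < 0" using X_t1 X_t0 \<open>0 \<le> (\<delta> / 2) * (r t0 - p)\<close> by linarith
    then show False using nonneg \<open>0 \<le> t1\<close> by force
  next
    case False
    then have "(\<delta> / 2) * (r t0 - p) < \<eta>"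
      using X_t1 X_t0 nonneg[OF \<open>0 \<le> t1\<close>] \<open>N t0 \<le> N t1\<close> by simp
    then have "x - \<eta> * (1 + 2 * h / \<delta>) < (\<Sum>i<N t0. u i)" "(\<Sum>i<N t0. u i) \<le> x"
      using risk_path_claim_sum_window[OF mono_on_interval ge[of 0] \<open>0 \<le> t0\<close> \<open>t0 \<le> h\<close> \<open>0 < \<delta>\<close>]
        nonneg[OF \<open>0 \<le> t0\<close> \<open>t0 \<le> t1\<close>] X_t0 by (simp_all add: X_def)
    then show False
      using gap[of "N t0"] x \<open>N t0 \<le> N t1\<close> \<open>N t1 \<le> n\<close> by (cases "N t0 = 0") (auto simp: \<eta>_def mult.assoc)
  qed
qed

lemma first_negative_le_raised:
  fixes x p c T \<delta> :: real and r :: "real \<Rightarrow> real" and N :: "real \<Rightarrow> nat" and u :: "nat \<Rightarrow> real"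
  defines "X \<equiv> risk_path x p N u r" and "X' \<equiv> risk_path x p N u (\<lambda>s. max (r s) c)"
    and "h \<equiv> T + \<delta>"
  assumes mono: "mono_on {0..} r" and ge: "\<And>t. 0 \<le> t \<Longrightarrow> p \<le> r t" and "p < c"
    and N_mono: "\<And>s t. 0 \<le> s \<Longrightarrow> s \<le> t \<Longrightarrow> t \<le> h \<Longrightarrow> N s \<le> N t"
    and N_le: "\<And>t. 0 \<le> t \<Longrightarrow> t \<le> h \<Longrightarrow> N t \<le> n"
    and large: "\<And>i. i < n \<Longrightarrow> (c - p) * h \<le> u i"
    and gap: "\<And>k. 1 \<le> k \<Longrightarrow> k \<le> n \<Longrightarrow>
                \<not> (x - (c - p) * h * (1 + 2 * h / \<delta>) < (\<Sum>i<k. u i) \<and> (\<Sum>i<k. u i) \<le> x)"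
    and x: "(c - p) * h * (1 + 2 * h / \<delta>) \<le> x"
    and "0 < \<delta>" and early: "first_negative X' \<le> ereal T"
  shows "first_negative X \<le> first_negative X' + ereal \<delta>"
proof -
  obtain \<rho> t0 where \<rho>: "first_negative X' = ereal \<rho>" "0 \<le> \<rho>" "\<rho> \<le> T"
    and t0: "\<rho> \<le> t0" "t0 < \<rho> + \<delta> / 2" "X' t0 < 0"
    using first_negative_finite_approx[OF early, of "\<delta> / 2"] \<open>0 < \<delta>\<close> by auto
  have "\<exists>t\<in>{0..t0 + \<delta> / 2}. X t < 0"
    unfolding X_def
    by (rule raised_risk_path_neg_imp_neg[OF mono ge \<open>p < c\<close> N_mono N_le large gap x \<open>0 < \<delta>\<close>])
      (use \<rho> t0 in \<open>auto simp: X'_def h_def\<close>)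
  then obtain t where t: "0 \<le> t" "t \<le> t0 + \<delta> / 2" "X t < 0" by auto
  have "first_negative X \<le> ereal t" using first_negative_le t(1,3) by blast
  also have "\<dots> \<le> first_negative X' + ereal \<delta>" using t(2) t0(2) \<rho>(1) by simp
  finally show ?thesis .
qed

(* Only k has to be measurable: the payout of an admissible strategy is not known to be measurable
   in \<omega>, since the values C t are only measurable for a completed filtration. *)
lemma nn_integral_le_add_measurable:
  assumes k: "k \<in> borel_measurable M" and k_finite: "\<And>x. k x < \<infinity>"
    and le: "\<And>x. x \<in> space M \<Longrightarrow> f x \<le> g x + k x"
  shows "integral\<^sup>N M f \<le> integral\<^sup>N M g + integral\<^sup>N M k"
  unfolding nn_integral_def[of M f]
proof (rule SUP_least, clarify)
  fix s assume s: "simple_function M s" "s \<le> f"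
  have "integral\<^sup>S M s = integral\<^sup>N M s" using s by (simp add: nn_integral_eq_simple_integral)
  also have "\<dots> \<le> (\<integral>\<^sup>+x. (s x - k x) + k x \<partial>M)"
    by (rule nn_integral_mono) (auto simp: diff_add_self_ennreal)
  also have "\<dots> = (\<integral>\<^sup>+x. s x - k x \<partial>M) + integral\<^sup>N M k"
    using borel_measurable_simple_function[OF s(1)] k by (intro nn_integral_add) auto
  also have "(\<integral>\<^sup>+x. s x - k x \<partial>M) \<le> integral\<^sup>N M g"
  proof (rule nn_integral_mono)
    fix x assume "x \<in> space M"
    then have "s x \<le> g x + k x" using le s(2) order_trans[of "s x" "f x"] by (auto simp: le_fun_def)
    then show "s x - k x \<le> g x" using k_finite[of x] by (auto simp: ennreal_minus_le_iff add.commute)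
  qed
  finally show "integral\<^sup>S M s \<le> integral\<^sup>N M g + integral\<^sup>N M k" by (simp add: add_right_mono)
qed

lemma nn_integral_exp_tail:
  assumes "0 < q"
  shows "(\<integral>\<^sup>+s. ennreal (exp (- q * s)) * indicator {T..} s \<partial>lborel) = ennreal (exp (- q * T) / q)"
proof -
  have "(\<integral>\<^sup>+s. ennreal (exp (- q * s)) * indicator {T..} s \<partial>lborel) = ennreal (0 - (- exp (- q * T) / q))"
  proof (rule nn_integral_FTC_atLeast)
    fix s :: real
    show "((\<lambda>s. - exp (- q * s) / q) has_real_derivative exp (- q * s)) (at s)"
      using assms by (auto intro!: derivative_eq_intros simp: field_simps)
    have "((\<lambda>s. - exp (- q * s) / q) \<longlongrightarrow> - 0 / q) at_top"
      using assms by (intro tendsto_intros filterlim_compose[OF exp_at_bot]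
          filterlim_tendsto_neg_mult_at_bot[OF tendsto_const] filterlim_ident) auto
    then show "((\<lambda>s. - exp (- q * s) / q) \<longlongrightarrow> 0) at_top" by simp
  qed auto
  then show ?thesis by simp
qed

lemma exp_tail_le:
  fixes q \<delta> :: real
  assumes "0 < q" "0 < \<delta>"
  obtains T where "0 \<le> T" "exp (- q * T) / q \<le> \<delta>"
proof
  show "0 \<le> \<bar>ln (q * \<delta>)\<bar> / q" using \<open>0 < q\<close> by simp
  have "exp (- q * (\<bar>ln (q * \<delta>)\<bar> / q)) \<le> exp (ln (q * \<delta>))" using \<open>0 < q\<close> by simp
  then show "exp (- q * (\<bar>ln (q * \<delta>)\<bar> / q)) / q \<le> \<delta>"
    using assms by (simp add: field_simps)
qed

definition discounted_payout :: "real \<Rightarrow> ereal \<Rightarrow> (real \<Rightarrow> real) \<Rightarrow> ennreal" where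
  "discounted_payout q \<tau> r =
     (\<integral>\<^sup>+s. ennreal (indicator {s. 0 \<le> s \<and> ereal s < \<tau>} s * exp (- q * s) * r s) \<partial>lborel)"

lemma Jval_eq_discounted_payout:
  "Jval M E U p q x C = enn2real (\<integral>\<^sup>+\<omega>. discounted_payout q (ruin_time E U p x C \<omega>) (\<lambda>s. C s \<omega>) \<partial>M)"
  by (simp add: Jval_def discounted_payout_def)

lemma Jval_nonneg: "0 \<le> Jval M E U p q x C"
  by (simp add: Jval_def)

lemma discounted_payout_le:
  assumes "0 < q" "0 \<le> cbar" and le: "\<And>s. 0 \<le> s \<Longrightarrow> r s \<le> cbar"
  shows "discounted_payout q \<tau> r \<le> ennreal (cbar / q)"
proof -
  have "discounted_payout q \<tau> r \<le> (\<integral>\<^sup>+s. ennreal cbar * (ennreal (exp (- q * s)) * indicator {0..} s) \<partial>lborel)"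
    unfolding discounted_payout_def
  proof (rule nn_integral_mono)
    fix s :: real
    have "0 \<le> s \<Longrightarrow> exp (- q * s) * r s \<le> exp (- q * s) * cbar" using le[of s] by simp
    then show "ennreal (indicator {s. 0 \<le> s \<and> ereal s < \<tau>} s * exp (- q * s) * r s)
        \<le> ennreal cbar * (ennreal (exp (- q * s)) * indicator {0..} s)"
      using \<open>0 \<le> cbar\<close> by (auto simp: ennreal_mult'[symmetric] mult.commute split: split_indicator)
  qed
  also have "\<dots> = ennreal (cbar / q)"
    using nn_integral_exp_tail[OF \<open>0 < q\<close>, of 0] \<open>0 \<le> cbar\<close>
    by (simp add: nn_integral_cmult ennreal_mult'[symmetric])
  finally show ?thesis .
qed

lemma nn_integral_discounted_late_window_le:
  fixes a b :: ereal
  assumes "0 < q" "0 \<le> cbar" and late: "ereal T \<le> a"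
  shows "(\<integral>\<^sup>+s. ennreal (cbar * indicator {s. 0 \<le> s \<and> a \<le> ereal s \<and> ereal s < b} s * exp (- q * s)) \<partial>lborel)
    \<le> ennreal (cbar * (exp (- q * T) / q))" (is "integral\<^sup>N lborel ?h \<le> _")
proof -
  have "integral\<^sup>N lborel ?h \<le> (\<integral>\<^sup>+s. ennreal cbar * (ennreal (exp (- q * s)) * indicator {T..} s) \<partial>lborel)"
  proof (rule nn_integral_mono)
    fix s :: real
    have "a \<le> ereal s \<Longrightarrow> T \<le> s" using late by (metis ereal_less_eq(3) order_trans)
    then show "?h s \<le> ennreal cbar * (ennreal (exp (- q * s)) * indicator {T..} s)"
      using \<open>0 \<le> cbar\<close> by (auto simp: ennreal_mult' split: split_indicator)
  qed
  also have "\<dots> = ennreal (cbar * (exp (- q * T) / q))"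
    using nn_integral_exp_tail[OF \<open>0 < q\<close>, of T] \<open>0 \<le> cbar\<close>
    by (simp add: nn_integral_cmult ennreal_mult'[symmetric])
  finally show ?thesis .
qed

lemma nn_integral_discounted_short_window_le:
  fixes a b :: ereal
  assumes "0 < q" "0 \<le> cbar" "0 \<le> \<delta>" and short: "b \<le> a + ereal \<delta>"
  shows "(\<integral>\<^sup>+s. ennreal (cbar * indicator {s. 0 \<le> s \<and> a \<le> ereal s \<and> ereal s < b} s * exp (- q * s)) \<partial>lborel)
    \<le> ennreal (cbar * \<delta>)" (is "integral\<^sup>N lborel ?h \<le> _")
proof (cases a)
  case (real \<rho>)
  have "integral\<^sup>N lborel ?h \<le> (\<integral>\<^sup>+s. ennreal cbar * indicator {\<rho>..\<rho> + \<delta>} s \<partial>lborel)"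
  proof (rule nn_integral_mono)
    fix s :: real
    show "?h s \<le> ennreal cbar * indicator {\<rho>..\<rho> + \<delta>} s"
    proof (cases "0 \<le> s \<and> a \<le> ereal s \<and> ereal s < b")
      case True
      have "ereal s < ereal (\<rho> + \<delta>)"
        using True short real by (metis less_le_trans plus_ereal.simps(1))
      then have "\<rho> \<le> s \<and> s \<le> \<rho> + \<delta>" using True real by simp
      moreover have "cbar * exp (- (q * s)) \<le> cbar"
        using True \<open>0 < q\<close> \<open>0 \<le> cbar\<close> by (simp add: mult_left_le)
      ultimately show ?thesis using True by (simp add: ennreal_leI)
    qed simp
  qed
  also have "\<dots> = ennreal (cbar * \<delta>)"
    using \<open>0 \<le> \<delta>\<close> \<open>0 \<le> cbar\<close> by (simp add: nn_integral_cmult_indicator ennreal_mult)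
  finally show ?thesis .
next
  case PInf
  then show ?thesis by simp
next
  case MInf
  then show ?thesis using short by simp
qed

lemma discounted_payout_le_window:
  fixes a b :: ereal
  assumes r: "\<And>s. 0 \<le> s \<Longrightarrow> 0 \<le> r s \<and> r s \<le> cbar"
  shows "discounted_payout q b r \<le> discounted_payout q a (\<lambda>s. max (r s) c)
    + (\<integral>\<^sup>+s. ennreal (cbar * indicator {s. 0 \<le> s \<and> a \<le> ereal s \<and> ereal s < b} s * exp (- q * s)) \<partial>lborel)"
proof -
  define h where "h s = ennreal (cbar * indicator {s. 0 \<le> s \<and> a \<le> ereal s \<and> ereal s < b} s * exp (- q * s))"
    for s
  have "{s. 0 \<le> s \<and> a \<le> ereal s \<and> ereal s < b} = ereal -` {a..<b} \<inter> space borel \<inter> {0..}"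
    by auto
  also have "\<dots> \<in> sets borel" by (intro sets.Int measurable_sets[of _ borel borel]) auto
  finally have [measurable]: "{s. 0 \<le> s \<and> a \<le> ereal s \<and> ereal s < b} \<in> sets borel" .
  have h_measurable: "h \<in> borel_measurable lborel" unfolding h_def by measurable
  have pointwise: "ennreal (indicator {s. 0 \<le> s \<and> ereal s < b} s * exp (- q * s) * r s)
      \<le> ennreal (indicator {s. 0 \<le> s \<and> ereal s < a} s * exp (- q * s) * max (r s) c) + h s" for s
  proof (cases "0 \<le> s \<and> ereal s < b")
    case True
    show ?thesis
    proof (cases "ereal s < a")
      case True
      then show ?thesis using \<open>0 \<le> s \<and> ereal s < b\<close>
        by (intro add_increasing2 ennreal_leI) (auto simp: h_def)
    next
      case False
      then have "h s = ennreal (cbar * exp (- q * s))" using True by (simp add: h_def)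
      moreover have "indicator {s. 0 \<le> s \<and> ereal s < b} s * exp (- q * s) * r s \<le> cbar * exp (- q * s)"
        using True r[of s] by (simp add: mult.commute)
      ultimately have "ennreal (indicator {s. 0 \<le> s \<and> ereal s < b} s * exp (- q * s) * r s) \<le> h s"
        by (simp add: ennreal_leI)
      then show ?thesis by (rule order_trans) simp
    qed
  qed simp
  show ?thesis
    unfolding discounted_payout_def h_def[symmetric]
    by (rule nn_integral_le_add_measurable[OF h_measurable _ pointwise]) (simp add: h_def)
qed

lemma discounted_payout_le_shorter_horizon:
  fixes a b :: ereal
  assumes "0 < q" "0 \<le> \<delta>" and short: "a \<le> ereal T \<Longrightarrow> b \<le> a + ereal \<delta>"
    and r: "\<And>s. 0 \<le> s \<Longrightarrow> 0 \<le> r s \<and> r s \<le> cbar"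
  shows "discounted_payout q b r
    \<le> discounted_payout q a (\<lambda>s. max (r s) c) + ennreal (cbar * max (exp (- q * T) / q) \<delta>)"
proof -
  have "0 \<le> cbar" using r[of 0] by simp
  let ?window = "\<integral>\<^sup>+s. ennreal (cbar * indicator {s. 0 \<le> s \<and> a \<le> ereal s \<and> ereal s < b} s * exp (- q * s)) \<partial>lborel"
  have "discounted_payout q b r \<le> discounted_payout q a (\<lambda>s. max (r s) c) + ?window"
    by (rule discounted_payout_le_window) (rule r)
  also have "?window \<le> ennreal (cbar * max (exp (- q * T) / q) \<delta>)"
  proof (cases "ereal T \<le> a")
    case True
    then have "?window \<le> ennreal (cbar * (exp (- q * T) / q))"
      by (rule nn_integral_discounted_late_window_le[OF \<open>0 < q\<close> \<open>0 \<le> cbar\<close>])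
    also have "\<dots> \<le> ennreal (cbar * max (exp (- q * T) / q) \<delta>)"
      using \<open>0 \<le> cbar\<close> by (intro ennreal_leI mult_left_mono) auto
    finally show ?thesis .
  next
    case False
    then have "?window \<le> ennreal (cbar * \<delta>)"
      using short by (intro nn_integral_discounted_short_window_le[OF \<open>0 < q\<close> \<open>0 \<le> cbar\<close> \<open>0 \<le> \<delta>\<close>]) simp
    also have "\<dots> \<le> ennreal (cbar * max (exp (- q * T) / q) \<delta>)"
      using \<open>0 \<le> cbar\<close> by (intro ennreal_leI mult_left_mono) auto
    finally show ?thesis .
  qed
  finally show ?thesis by (simp add: add_left_mono)
qed

lemma arrivals_before_arrival:
  assumes "\<And>i. 0 < E i \<omega>" and "t < arrival E n \<omega>"
  shows "{k. arrival E k \<omega> \<le> t} \<subseteq> {..<n}"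
proof
  fix k assume k: "k \<in> {k. arrival E k \<omega> \<le> t}"
  show "k \<in> {..<n}"
  proof (rule ccontr)
    assume "k \<notin> {..<n}"
    then have "arrival E n \<omega> \<le> arrival E k \<omega>"
      unfolding arrival_def using assms(1) by (intro sum_mono2) (auto intro: less_imp_le)
    then show False using k assms(2) by simp
  qed
qed

lemma Npois_le_before_arrival:
  assumes "\<And>i. 0 < E i \<omega>" and "t < arrival E n \<omega>"
  shows "Npois E t \<omega> \<le> n"
  using card_mono[OF finite_lessThan arrivals_before_arrival[OF assms]] by (simp add: Npois_def)

lemma Npois_mono_before_arrival:
  assumes "\<And>i. 0 < E i \<omega>" and "s \<le> t" "t < arrival E n \<omega>"
  shows "Npois E s \<omega> \<le> Npois E t \<omega>"
proof -
  have "finite {k. arrival E k \<omega> \<le> t}"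
    using finite_subset[OF arrivals_before_arrival[OF assms(1,3)]] by simp
  then show ?thesis
    unfolding Npois_def using \<open>s \<le> t\<close> by (intro card_mono) auto
qed

lemma discounted_payout_le_raised_rate:
  fixes C :: "real \<Rightarrow> 'a \<Rightarrow> real" and x p c cbar q T \<delta> :: real
  defines "w \<equiv> (c - p) * (T + \<delta>) * (1 + 2 * (T + \<delta>) / \<delta>)"
  assumes mono: "mono_on {0..} (\<lambda>t. C t \<omega>)" and bounds: "\<And>t. 0 \<le> t \<Longrightarrow> p \<le> C t \<omega> \<and> C t \<omega> \<le> cbar"
    and "0 < p" "p < c" "0 < \<delta>" "0 \<le> T" "0 < q"
    and E_pos: "\<And>i. 0 < E i \<omega>" and late: "T + \<delta> < arrival E n \<omega>"
    and large: "\<And>i. i < n \<Longrightarrow> (c - p) * (T + \<delta>) \<le> U i \<omega>"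
    and gap: "\<And>k. 1 \<le> k \<Longrightarrow> k \<le> n \<Longrightarrow> \<not> (x - w < (\<Sum>i<k. U i \<omega>) \<and> (\<Sum>i<k. U i \<omega>) \<le> x)"
    and "w \<le> x"
  shows "discounted_payout q (ruin_time E U p x C \<omega>) (\<lambda>s. C s \<omega>)
    \<le> discounted_payout q (ruin_time E U p x (\<lambda>t \<omega>. max (C t \<omega>) c) \<omega>) (\<lambda>s. max (C s \<omega>) c)
       + ennreal (cbar * max (exp (- q * T) / q) \<delta>)"
proof (rule discounted_payout_le_shorter_horizon[OF \<open>0 < q\<close> less_imp_le[OF \<open>0 < \<delta>\<close>]])
  have N_mono: "Npois E s \<omega> \<le> Npois E t \<omega>" if "0 \<le> s" "s \<le> t" "t \<le> T + \<delta>" for s t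
    using Npois_mono_before_arrival[of E \<omega> s t n] E_pos late that by simp
  have N_le: "Npois E t \<omega> \<le> n" if "0 \<le> t" "t \<le> T + \<delta>" for t
    using Npois_le_before_arrival[of E \<omega> t n] E_pos late that by simp
  have ge: "p \<le> C t \<omega>" if "0 \<le> t" for t
    using bounds[OF that] by simp
  show "ruin_time E U p x C \<omega> \<le> ruin_time E U p x (\<lambda>t \<omega>. max (C t \<omega>) c) \<omega> + ereal \<delta>"
    if "ruin_time E U p x (\<lambda>t \<omega>. max (C t \<omega>) c) \<omega> \<le> ereal T"
    using first_negative_le_raised[OF mono ge \<open>p < c\<close> N_mono N_le large gap[unfolded w_def]
        \<open>w \<le> x\<close>[unfolded w_def] \<open>0 < \<delta>\<close>] that
    by (simp add: ruin_time_eq_first_negative)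
  show "0 \<le> C s \<omega> \<and> C s \<omega> \<le> cbar" if "0 \<le> s" for s
    using bounds[OF that] \<open>0 < p\<close> by simp
qed

lemma completed_filt_trivial:
  "{} \<in> completed_filt M X t" "space M \<in> completed_filt M X t"
proof -
  have "A \<in> completed_filt M X t" if "A \<in> {{}, space M}" for A
  proof -
    have "A \<in> nat_filt M X t"
      using that sigma_sets_top sigma_sets.Empty unfolding nat_filt_def by auto
    then show ?thesis
      using that unfolding completed_filt_def by (intro CollectI conjI bexI[of _ "{}"] bexI[of _ A]) auto
  qed
  then show "{} \<in> completed_filt M X t" and "space M \<in> completed_filt M X t" by auto
qed

lemma admissibleD:
  assumes "C \<in> admissible M E U p cbar x c" "0 < x"
  shows "\<And>t B. 0 \<le> t \<Longrightarrow> B \<in> sets borel \<Longrightarrow>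
      C t -` B \<inter> space M \<in> completed_filt M (surplus E U p x) t"
    and "\<And>\<omega>. \<omega> \<in> space M \<Longrightarrow> mono_on {0..} (\<lambda>t. C t \<omega>)"
    and "\<And>\<omega> t. \<omega> \<in> space M \<Longrightarrow> 0 \<le> t \<Longrightarrow> continuous (at_right t) (\<lambda>s. C s \<omega>)"
    and "\<And>\<omega> t. \<omega> \<in> space M \<Longrightarrow> 0 < t \<Longrightarrow> \<exists>l. ((\<lambda>s. C s \<omega>) \<longlongrightarrow> l) (at_left t)"
    and "\<And>\<omega> t. \<omega> \<in> space M \<Longrightarrow> 0 \<le> t \<Longrightarrow> c \<le> C t \<omega> \<and> C t \<omega> \<le> cbar"
    and "\<And>\<omega> t s. \<omega> \<in> space M \<Longrightarrow> 0 < t \<Longrightarrow> ((\<lambda>s. C s \<omega>) \<longlongrightarrow> p) (at_left t) \<Longrightarrow>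
      controlled E U p x C t \<omega> = 0 \<Longrightarrow> t \<le> s \<Longrightarrow> ereal s < ruin_time E U p x C \<omega> \<Longrightarrow> C s \<omega> = p"
proof -
  have "\<not> (x = 0 \<and> c = p)" using assms(2) by simp
  note props = assms(1)[unfolded admissible_def if_not_P[OF this] mem_Collect_eq]
  show "\<And>t B. 0 \<le> t \<Longrightarrow> B \<in> sets borel \<Longrightarrow>
      C t -` B \<inter> space M \<in> completed_filt M (surplus E U p x) t"
    and "\<And>\<omega>. \<omega> \<in> space M \<Longrightarrow> mono_on {0..} (\<lambda>t. C t \<omega>)"
    and "\<And>\<omega> t. \<omega> \<in> space M \<Longrightarrow> 0 \<le> t \<Longrightarrow> continuous (at_right t) (\<lambda>s. C s \<omega>)"
    and "\<And>\<omega> t. \<omega> \<in> space M \<Longrightarrow> 0 < t \<Longrightarrow> \<exists>l. ((\<lambda>s. C s \<omega>) \<longlongrightarrow> l) (at_left t)"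
    and "\<And>\<omega> t. \<omega> \<in> space M \<Longrightarrow> 0 \<le> t \<Longrightarrow> c \<le> C t \<omega> \<and> C t \<omega> \<le> cbar"
    and "\<And>\<omega> t s. \<omega> \<in> space M \<Longrightarrow> 0 < t \<Longrightarrow> ((\<lambda>s. C s \<omega>) \<longlongrightarrow> p) (at_left t) \<Longrightarrow>
      controlled E U p x C t \<omega> = 0 \<Longrightarrow> t \<le> s \<Longrightarrow> ereal s < ruin_time E U p x C \<omega> \<Longrightarrow> C s \<omega> = p"
    using props by meson+
qed

lemma admissibleI:
  assumes "0 < x"
    and "\<And>t B. 0 \<le> t \<Longrightarrow> B \<in> sets borel \<Longrightarrow>
      C t -` B \<inter> space M \<in> completed_filt M (surplus E U p x) t"
    and "\<And>\<omega>. \<omega> \<in> space M \<Longrightarrow> mono_on {0..} (\<lambda>t. C t \<omega>)"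
    and "\<And>\<omega> t. \<omega> \<in> space M \<Longrightarrow> 0 \<le> t \<Longrightarrow> continuous (at_right t) (\<lambda>s. C s \<omega>)"
    and "\<And>\<omega> t. \<omega> \<in> space M \<Longrightarrow> 0 < t \<Longrightarrow> \<exists>l. ((\<lambda>s. C s \<omega>) \<longlongrightarrow> l) (at_left t)"
    and "\<And>\<omega> t. \<omega> \<in> space M \<Longrightarrow> 0 \<le> t \<Longrightarrow> c \<le> C t \<omega> \<and> C t \<omega> \<le> cbar"
    and "\<And>\<omega> t s. \<omega> \<in> space M \<Longrightarrow> 0 < t \<Longrightarrow> ((\<lambda>s. C s \<omega>) \<longlongrightarrow> p) (at_left t) \<Longrightarrow>
      controlled E U p x C t \<omega> = 0 \<Longrightarrow> t \<le> s \<Longrightarrow> ereal s < ruin_time E U p x C \<omega> \<Longrightarrow> C s \<omega> = p"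
  shows "C \<in> admissible M E U p cbar x c"
proof -
  have "\<not> (x = 0 \<and> c = p)" using assms(1) by simp
  then show ?thesis
    unfolding admissible_def if_not_P[OF \<open>\<not> (x = 0 \<and> c = p)\<close>] mem_Collect_eq
    using assms(2-) by (intro conjI ballI allI impI) meson+
qed

lemma admissible_antimono:
  assumes "0 < x" "p \<le> c"
  shows "admissible M E U p cbar x c \<subseteq> admissible M E U p cbar x p"
proof
  fix C assume C: "C \<in> admissible M E U p cbar x c"
  note props = admissibleD[OF C \<open>0 < x\<close>]
  show "C \<in> admissible M E U p cbar x p"
  proof (rule admissibleI[OF \<open>0 < x\<close> props(1-4) _ props(6)])
    show "p \<le> C t \<omega> \<and> C t \<omega> \<le> cbar" if "\<omega> \<in> space M" "0 \<le> t" for \<omega> t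
      using props(5)[OF that] \<open>p \<le> c\<close> by linarith
  qed
qed

lemma const_admissible:
  assumes "0 < x" "c \<le> cbar"
  shows "(\<lambda>t \<omega>. c) \<in> admissible M E U p cbar x c"
proof (rule admissibleI[OF \<open>0 < x\<close>])
  show "(\<lambda>\<omega>. c) -` B \<inter> space M \<in> completed_filt M (surplus E U p x) t" for B t
    using completed_filt_trivial by (cases "c \<in> B") auto
  show "mono_on {0..} (\<lambda>t. c)" by (simp add: mono_on_def)
  show "continuous (at_right t) (\<lambda>s. c)" for t :: real by (rule continuous_const)
  show "\<exists>l. ((\<lambda>s. c) \<longlongrightarrow> l) (at_left t)" for t :: real using tendsto_const by blast
  show "c \<le> c \<and> c \<le> cbar" using \<open>c \<le> cbar\<close> by simp
  show "c = p" if "((\<lambda>s. c) \<longlongrightarrow> p) (at_left t)" for t :: real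
    using that by (simp add: tendsto_const_iff)
qed

lemma max_admissible:
  assumes C: "C \<in> admissible M E U p cbar x p" and "0 < x" "p < c" "c \<le> cbar"
  shows "(\<lambda>t \<omega>. max (C t \<omega>) c) \<in> admissible M E U p cbar x c"
proof (rule admissibleI[OF \<open>0 < x\<close>])
  note C_props = admissibleD[OF C \<open>0 < x\<close>]
  show "(\<lambda>\<omega>. max (C t \<omega>) c) -` B \<inter> space M \<in> completed_filt M (surplus E U p x) t"
    if "0 \<le> t" "B \<in> sets borel" for t B
  proof -
    have "(\<lambda>y. max y c) -` B \<in> sets borel"
      using measurable_sets[OF _ \<open>B \<in> sets borel\<close>, of "\<lambda>y. max y c" borel] by simp
    from C_props(1)[OF \<open>0 \<le> t\<close> this] show ?thesis by (simp add: vimage_def)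
  qed
  show "\<exists>l. ((\<lambda>s. max (C s \<omega>) c) \<longlongrightarrow> l) (at_left t)" if "\<omega> \<in> space M" "0 < t" for \<omega> t
    using C_props(4)[OF that] tendsto_max[OF _ tendsto_const] by blast
  show "continuous (at_right t) (\<lambda>s. max (C s \<omega>) c)" if "\<omega> \<in> space M" "0 \<le> t" for \<omega> t
    using C_props(3)[OF that] by (intro continuous_max continuous_const)
  show "max (C s \<omega>) c = p" if "((\<lambda>s. max (C s \<omega>) c) \<longlongrightarrow> p) (at_left t)" for \<omega> t s
  proof -
    have "c \<le> p" using that by (rule tendsto_lowerbound) (auto simp: trivial_limit_at_left_real)
    then show ?thesis using \<open>p < c\<close> by simp
  qed
  show "mono_on {0..} (\<lambda>t. max (C t \<omega>) c)" if "\<omega> \<in> space M" for \<omega>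
    using mono_on_max_const[OF C_props(2)[OF that]] .
  show "c \<le> max (C t \<omega>) c \<and> max (C t \<omega>) c \<le> cbar" if "\<omega> \<in> space M" "0 \<le> t" for \<omega> t
    using C_props(5)[OF that] \<open>c \<le> cbar\<close> by simp
qed

lemma erlang_CDF_tendsto_0:
  assumes "0 < l"
  shows "(\<lambda>n. erlang_CDF n l T) \<longlonglongrightarrow> 0"
proof (cases "T < 0")
  case True
  then show ?thesis by (simp add: erlang_CDF_def)
next
  case False
  have "(\<lambda>n. (l * T) ^ n /\<^sub>R fact n) sums exp (l * T)" by (rule exp_converges)
  then have "(\<lambda>n. \<Sum>i<Suc n. (l * T) ^ i / fact i) \<longlonglongrightarrow> exp (l * T)"
    by (intro LIMSEQ_Suc) (simp add: sums_def divide_inverse mult.commute)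
  then have "(\<lambda>n. 1 - (\<Sum>i\<le>n. (l * T) ^ i / fact i) * exp (- l * T))
      \<longlonglongrightarrow> 1 - exp (l * T) * exp (- l * T)"
    by (intro tendsto_intros) (simp add: lessThan_Suc_atMost)
  moreover have "erlang_CDF n l T = 1 - (\<Sum>i\<le>n. (l * T) ^ i / fact i) * exp (- l * T)" for n
    using False by (simp add: erlang_CDF_def sum_distrib_right)
  ultimately show ?thesis by (simp add: exp_minus)
qed

locale cramer_lundberg_model =
  fixes M :: "'a measure" and \<beta> p :: real and F :: "real \<Rightarrow> real" and E U :: "nat \<Rightarrow> 'a \<Rightarrow> real"
  assumes model: "cramer_lundberg M \<beta> p F E U"
begin

sublocale prob_space M
  using model by (simp add: cramer_lundberg_def)

lemma beta_pos: "0 < \<beta>"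
  and premium_pos: "0 < p"
  and E_distributed: "distributed M lborel (E n) (exponential_density \<beta>)"
  and U_measurable [measurable]: "U n \<in> borel_measurable M"
  and U_cdf: "prob {\<omega> \<in> space M. U n \<omega> \<le> y} = F y"
  and U_pos: "AE \<omega> in M. 0 < U n \<omega>"
  and indep_E_U: "indep_vars (\<lambda>_. borel) (\<lambda>i. case i of Inl n \<Rightarrow> E n | Inr n \<Rightarrow> U n) UNIV"
  and F_lipschitz: "\<exists>K>0. \<forall>a b. a < b \<longrightarrow> 0 \<le> F b - F a \<and> F b - F a \<le> K * (b - a)"
  using model by (auto simp: cramer_lundberg_def)

lemma E_measurable [measurable]: "E n \<in> borel_measurable M"
  using distributed_measurable[OF E_distributed] by simp

lemma E_nonpos_null: "{\<omega> \<in> space M. E n \<omega> \<le> 0} \<in> null_sets M"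
proof -
  have "prob {\<omega> \<in> space M. E n \<omega> \<le> 0} = 0"
    using exponential_distributedD_le[OF E_distributed order_refl beta_pos] by simp
  then show ?thesis by (simp add: null_sets_def emeasure_eq_measure)
qed

lemma arrival_distributed: "distributed M lborel (arrival E n) (erlang_density n \<beta>)"
proof -
  let ?X = "\<lambda>i. case i of Inl n \<Rightarrow> E n | Inr n \<Rightarrow> U n"
  have "indep_vars (\<lambda>_. borel) ?X (Inl ` {..n})"
    by (rule indep_vars_subset[OF indep_E_U]) auto
  then have "distributed M lborel (\<lambda>\<omega>. \<Sum>i\<in>Inl ` {..n}. ?X i \<omega>)
      (erlang_density (card (Inl ` {..n} :: (nat + nat) set) - 1) \<beta>)"
    by (intro exponential_distributed_sum beta_pos) (auto intro: E_distributed)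
  moreover have "(\<lambda>\<omega>. \<Sum>i\<in>Inl ` {..n}. ?X i \<omega>) = arrival E n"
    by (simp add: fun_eq_iff sum.reindex arrival_def)
  ultimately show ?thesis by (simp add: card_image)
qed

lemma prob_arrival_le: "0 \<le> T \<Longrightarrow> prob {\<omega> \<in> space M. arrival E n \<omega> \<le> T} = erlang_CDF n \<beta> T"
  using erlang_distributed_le[OF arrival_distributed beta_pos] by simp

lemma F_zero: "F 0 = 0"
proof -
  have "AE \<omega> in M. \<omega> \<notin> {\<omega> \<in> space M. U 0 \<omega> \<le> 0}"
    using U_pos[of 0] by eventually_elim auto
  then have "{\<omega> \<in> space M. U 0 \<omega> \<le> 0} \<in> null_sets M"
    by (subst AE_iff_null_sets) measurable
  then show ?thesis using U_cdf[of 0 0] by (simp add: measure_def null_setsD1)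
qed

lemma prob_U_interval:
  assumes "lo \<le> hi"
  shows "prob {\<omega> \<in> space M. lo < U n \<omega> \<and> U n \<omega> \<le> hi} = F hi - F lo"
proof -
  have "{\<omega> \<in> space M. lo < U n \<omega> \<and> U n \<omega> \<le> hi}
      = {\<omega> \<in> space M. U n \<omega> \<le> hi} - {\<omega> \<in> space M. U n \<omega> \<le> lo}"
    by auto
  moreover have "{\<omega> \<in> space M. U n \<omega> \<le> lo} \<subseteq> {\<omega> \<in> space M. U n \<omega> \<le> hi}" using assms by auto
  ultimately show ?thesis by (simp add: finite_measure_Diff U_cdf)
qed

(* The law of a partial claim sum is the convolution of the law of its last summand with that of
   the others, so a K-Lipschitz distribution function passes its modulus on. *)

lemma prob_claim_sum_interval:
  assumes K: "\<And>a b. a < b \<Longrightarrow> F b - F a \<le> K * (b - a)" and "lo < hi" "0 < k"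
  shows "prob {\<omega> \<in> space M. lo < (\<Sum>i<k. U i \<omega>) \<and> (\<Sum>i<k. U i \<omega>) \<le> hi} \<le> K * (hi - lo)"
proof -
  obtain m where k: "k = Suc m" using \<open>0 < k\<close> by (cases k) auto
  let ?X = "\<lambda>i. case i of Inl n \<Rightarrow> E n | Inr n \<Rightarrow> U n"
  define S where "S = (\<lambda>\<omega>. \<Sum>i<m. U i \<omega>)"
  have [measurable]: "S \<in> borel_measurable M" unfolding S_def by measurable
  have "indep_var borel (?X (Inr m)) borel (\<lambda>\<omega>. \<Sum>i\<in>Inr ` {..<m}. ?X i \<omega>)"
    by (rule indep_vars_sum) (auto intro: indep_vars_subset[OF indep_E_U])
  then have "indep_var borel (U m) borel S"
    by (simp add: S_def sum.reindex)
  then have conv: "distr M borel (\<lambda>\<omega>. U m \<omega> + S \<omega>) = convolution (distr M borel S) (distr M borel (U m))"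
    using sum_indep_random_variable[of "U m" S]
    by (simp add: convolution_commutative prob_space.finite_measure prob_space_distr)
  have "emeasure M {\<omega> \<in> space M. lo < (\<Sum>i<k. U i \<omega>) \<and> (\<Sum>i<k. U i \<omega>) \<le> hi}
      = emeasure (distr M borel (\<lambda>\<omega>. U m \<omega> + S \<omega>)) {lo<..hi}"
    by (subst emeasure_distr) (auto simp: k S_def add.commute intro!: arg_cong[where f="emeasure M"])
  also have "\<dots> = (\<integral>\<^sup>+s. emeasure (distr M borel (U m)) {a. a + s \<in> {lo<..hi}} \<partial>distr M borel S)"
    unfolding conv
    by (rule convolution_emeasure) (auto simp: prob_space.finite_measure prob_space_distr)
  also have "\<dots> \<le> (\<integral>\<^sup>+s. ennreal (K * (hi - lo)) \<partial>distr M borel S)"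
  proof (rule nn_integral_mono)
    fix s
    have "emeasure (distr M borel (U m)) {a. a + s \<in> {lo<..hi}}
        = emeasure M {\<omega> \<in> space M. lo - s < U m \<omega> \<and> U m \<omega> \<le> hi - s}"
      by (subst emeasure_distr) (auto intro!: arg_cong[where f="emeasure M"])
    also have "\<dots> = ennreal (F (hi - s) - F (lo - s))"
      using prob_U_interval[of "lo - s" "hi - s" m] \<open>lo < hi\<close> by (simp add: emeasure_eq_measure)
    also have "\<dots> \<le> ennreal (K * (hi - lo))"
      using K[of "lo - s" "hi - s"] \<open>lo < hi\<close> by (intro ennreal_leI) simp
    finally show "emeasure (distr M borel (U m)) {a. a + s \<in> {lo<..hi}} \<le> ennreal (K * (hi - lo))" .
  qed
  also have "\<dots> = ennreal (K * (hi - lo))"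
    using prob_space.emeasure_space_1[OF prob_space_distr[of S borel]] by simp
  finally have "emeasure M {\<omega> \<in> space M. lo < (\<Sum>i<k. U i \<omega>) \<and> (\<Sum>i<k. U i \<omega>) \<le> hi}
    \<le> ennreal (K * (hi - lo))" .
  moreover have "0 \<le> F hi - F lo" using F_lipschitz \<open>lo < hi\<close> by blast
  ultimately show ?thesis
    using K[OF \<open>lo < hi\<close>] by (simp add: emeasure_eq_measure)
qed

lemma prob_claim_lt:
  assumes K: "\<And>a b. a < b \<Longrightarrow> F b - F a \<le> K * (b - a)" and "0 < \<eta>"
  shows "prob {\<omega> \<in> space M. U i \<omega> < \<eta>} \<le> K * \<eta>"
proof -
  have "prob {\<omega> \<in> space M. U i \<omega> < \<eta>} \<le> prob {\<omega> \<in> space M. U i \<omega> \<le> \<eta>}"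
    by (rule finite_measure_mono) auto
  also have "\<dots> = F \<eta> - F 0" by (simp add: U_cdf F_zero)
  also have "\<dots> \<le> K * \<eta>" using K[of 0 \<eta>] \<open>0 < \<eta>\<close> by simp
  finally show ?thesis .
qed

definition bad_event :: "nat \<Rightarrow> real \<Rightarrow> real \<Rightarrow> real \<Rightarrow> real \<Rightarrow> 'a set" where
  "bad_event n h \<eta> x w = {\<omega> \<in> space M. (\<exists>i. E i \<omega> \<le> 0) \<or> arrival E n \<omega> \<le> h \<or> (\<exists>i<n. U i \<omega> < \<eta>) \<or>
     (\<exists>k\<in>{1..n}. x - w < (\<Sum>i<k. U i \<omega>) \<and> (\<Sum>i<k. U i \<omega>) \<le> x)}"

lemma bad_event_sets [measurable]: "bad_event n h \<eta> x w \<in> sets M"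
  unfolding bad_event_def arrival_def by measurable

lemma prob_bad_event:
  assumes K: "\<And>a b. a < b \<Longrightarrow> F b - F a \<le> K * (b - a)" and "0 \<le> h" "0 < \<eta>" "0 < w"
  shows "prob (bad_event n h \<eta> x w) \<le> erlang_CDF n \<beta> h + real n * K * (\<eta> + w)"
proof -
  define Z where "Z = (\<Union>i. {\<omega> \<in> space M. E i \<omega> \<le> 0})"
  define A0 where "A0 = {\<omega> \<in> space M. arrival E n \<omega> \<le> h}"
  define A1 where "A1 = (\<Union>i\<in>{..<n}. {\<omega> \<in> space M. U i \<omega> < \<eta>})"
  define A2 where "A2 = (\<Union>k\<in>{1..n}. {\<omega> \<in> space M. x - w < (\<Sum>i<k. U i \<omega>) \<and> (\<Sum>i<k. U i \<omega>) \<le> x})"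
  have [measurable]: "A0 \<in> events" "A1 \<in> events" "A2 \<in> events"
    unfolding A0_def A1_def A2_def arrival_def by measurable
  have "Z \<in> null_sets M" unfolding Z_def by (intro null_sets_UN E_nonpos_null)
  moreover have "bad_event n h \<eta> x w = (A0 \<union> A1 \<union> A2) \<union> Z"
    unfolding bad_event_def Z_def A0_def A1_def A2_def by auto
  ultimately have "prob (bad_event n h \<eta> x w) = prob (A0 \<union> A1 \<union> A2)"
    using measure_Un_null_set[of "A0 \<union> A1 \<union> A2" M Z] by simp
  also have "\<dots> \<le> prob A0 + prob A1 + prob A2"
    by (intro order_trans[OF measure_subadditive] add_right_mono measure_subadditive)
      auto
  also have "prob A0 = erlang_CDF n \<beta> h" unfolding A0_def by (rule prob_arrival_le[OF \<open>0 \<le> h\<close>])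
  also have "prob A1 \<le> (\<Sum>i<n. K * \<eta>)"
    unfolding A1_def using prob_claim_lt[OF K \<open>0 < \<eta>\<close>]
    by (intro order_trans[OF finite_measure_subadditive_finite] sum_mono) auto
  also have "prob A2 \<le> (\<Sum>k\<in>{1..n}. K * w)"
    unfolding A2_def using prob_claim_sum_interval[OF K, of "x - w" x] \<open>0 < w\<close>
    by (intro order_trans[OF finite_measure_subadditive_finite] sum_mono) auto
  finally show ?thesis by (simp add: algebra_simps)
qed

lemma nn_integral_discounted_payout_le:
  assumes "0 < q" "0 \<le> cbar" and le: "\<And>\<omega> t. \<omega> \<in> space M \<Longrightarrow> 0 \<le> t \<Longrightarrow> C t \<omega> \<le> cbar"
  shows "(\<integral>\<^sup>+\<omega>. discounted_payout q (\<tau> \<omega>) (\<lambda>s. C s \<omega>) \<partial>M) \<le> ennreal (cbar / q)"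
proof -
  have "(\<integral>\<^sup>+\<omega>. discounted_payout q (\<tau> \<omega>) (\<lambda>s. C s \<omega>) \<partial>M) \<le> (\<integral>\<^sup>+\<omega>. ennreal (cbar / q) \<partial>M)"
    using assms by (intro nn_integral_mono discounted_payout_le) auto
  then show ?thesis by (simp add: emeasure_space_1)
qed

lemma nn_integral_discounted_payout_eq_Jval:
  assumes "0 < q" "0 \<le> cbar" and le: "\<And>\<omega> t. \<omega> \<in> space M \<Longrightarrow> 0 \<le> t \<Longrightarrow> C t \<omega> \<le> cbar"
  shows "(\<integral>\<^sup>+\<omega>. discounted_payout q (ruin_time E U p x C \<omega>) (\<lambda>s. C s \<omega>) \<partial>M) = ennreal (Jval M E U p q x C)"
  unfolding Jval_eq_discounted_payout
  using le_less_trans[OF nn_integral_discounted_payout_le[where C = C, OF assms] ennreal_less_top] by simp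

lemma Jval_le:
  assumes "0 < q" "0 \<le> cbar" and le: "\<And>\<omega> t. \<omega> \<in> space M \<Longrightarrow> 0 \<le> t \<Longrightarrow> C t \<omega> \<le> cbar"
  shows "Jval M E U p q x C \<le> cbar / q"
proof -
  have "(\<integral>\<^sup>+\<omega>. discounted_payout q (ruin_time E U p x C \<omega>) (\<lambda>s. C s \<omega>) \<partial>M) \<le> ennreal (cbar / q)"
    by (rule nn_integral_discounted_payout_le) (use assms in auto)
  moreover have "(\<integral>\<^sup>+\<omega>. discounted_payout q (ruin_time E U p x C \<omega>) (\<lambda>s. C s \<omega>) \<partial>M)
      = ennreal (Jval M E U p q x C)"
    by (rule nn_integral_discounted_payout_eq_Jval) (use assms in auto)
  ultimately have "ennreal (Jval M E U p q x C) \<le> ennreal (cbar / q)" by simp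
  then show ?thesis using assms(1,2) by simp
qed

lemma Jval_le_Jval_add:
  assumes "0 < q" "0 \<le> cbar" "0 \<le> L" "0 \<le> b" and B [measurable]: "B \<in> sets M"
    and C: "\<And>\<omega> t. \<omega> \<in> space M \<Longrightarrow> 0 \<le> t \<Longrightarrow> C t \<omega> \<le> cbar"
    and C': "\<And>\<omega> t. \<omega> \<in> space M \<Longrightarrow> 0 \<le> t \<Longrightarrow> C' t \<omega> \<le> cbar"
    and pointwise: "\<And>\<omega>. \<omega> \<in> space M \<Longrightarrow>
      discounted_payout q (ruin_time E U p x C \<omega>) (\<lambda>s. C s \<omega>)
      \<le> discounted_payout q (ruin_time E U p x C' \<omega>) (\<lambda>s. C' s \<omega>) + (ennreal L + ennreal b * indicator B \<omega>)"
  shows "Jval M E U p q x C \<le> Jval M E U p q x C' + L + b * prob B"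
proof -
  have "(\<integral>\<^sup>+\<omega>. ennreal L + ennreal b * indicator B \<omega> \<partial>M) = ennreal L + ennreal b * emeasure M B"
    by (subst nn_integral_add) (simp_all add: nn_integral_cmult_indicator emeasure_space_1)
  also have "\<dots> = ennreal (L + b * prob B)"
    using \<open>0 \<le> L\<close> \<open>0 \<le> b\<close> by (simp add: emeasure_eq_measure ennreal_mult')
  finally have bad_part: "(\<integral>\<^sup>+\<omega>. ennreal L + ennreal b * indicator B \<omega> \<partial>M) = ennreal (L + b * prob B)" .
  have "(\<integral>\<^sup>+\<omega>. discounted_payout q (ruin_time E U p x C \<omega>) (\<lambda>s. C s \<omega>) \<partial>M)
      \<le> (\<integral>\<^sup>+\<omega>. discounted_payout q (ruin_time E U p x C' \<omega>) (\<lambda>s. C' s \<omega>) \<partial>M)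
        + (\<integral>\<^sup>+\<omega>. ennreal L + ennreal b * indicator B \<omega> \<partial>M)"
    by (rule nn_integral_le_add_measurable[OF _ _ pointwise])
      (simp_all add: ennreal_mult_less_top split: split_indicator)
  moreover have "(\<integral>\<^sup>+\<omega>. discounted_payout q (ruin_time E U p x C \<omega>) (\<lambda>s. C s \<omega>) \<partial>M)
      = ennreal (Jval M E U p q x C)"
    by (rule nn_integral_discounted_payout_eq_Jval) (use assms(1,2) C in auto)
  moreover have "(\<integral>\<^sup>+\<omega>. discounted_payout q (ruin_time E U p x C' \<omega>) (\<lambda>s. C' s \<omega>) \<partial>M)
      = ennreal (Jval M E U p q x C')"
    by (rule nn_integral_discounted_payout_eq_Jval) (use assms(1,2) C' in auto)
  ultimately have "ennreal (Jval M E U p q x C) \<le> ennreal (Jval M E U p q x C') + ennreal (L + b * prob B)"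
    unfolding bad_part by simp
  then show ?thesis
    using Jval_nonneg[of M E U p q x C'] \<open>0 \<le> L\<close> \<open>0 \<le> b\<close>
    by (simp del: ennreal_plus add: ennreal_plus[symmetric] add.assoc)
qed

lemma Jval_le_raised:
  fixes c cbar q x T \<delta> :: real
  defines "h \<equiv> T + \<delta>"
  defines "w \<equiv> (c - p) * h * (1 + 2 * h / \<delta>)"
  assumes C: "C \<in> admissible M E U p cbar x p"
    and "0 < x" "p < c" "c \<le> cbar" "0 < q" "0 < \<delta>" "0 \<le> T" "w \<le> x"
  shows "Jval M E U p q x C \<le> Jval M E U p q x (\<lambda>t \<omega>. max (C t \<omega>) c)
    + cbar * max (exp (- q * T) / q) \<delta> + cbar / q * prob (bad_event n h ((c - p) * h) x w)"
proof (rule Jval_le_Jval_add)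
  show "0 \<le> cbar" "0 \<le> cbar * max (exp (- q * T) / q) \<delta>" "0 \<le> cbar / q"
    using premium_pos \<open>p < c\<close> \<open>c \<le> cbar\<close> \<open>0 < \<delta>\<close> \<open>0 < q\<close> by auto
  note bounds = admissibleD(5)[OF C \<open>0 < x\<close>]
  show "C t \<omega> \<le> cbar" "max (C t \<omega>) c \<le> cbar" if "\<omega> \<in> space M" "0 \<le> t" for \<omega> t
    using bounds[OF that] \<open>c \<le> cbar\<close> by auto
  fix \<omega> assume \<omega>: "\<omega> \<in> space M"
  let ?L = "ennreal (cbar * max (exp (- q * T) / q) \<delta>)"
  let ?B = "bad_event n h ((c - p) * h) x w"
  show "discounted_payout q (ruin_time E U p x C \<omega>) (\<lambda>s. C s \<omega>)
    \<le> discounted_payout q (ruin_time E U p x (\<lambda>t \<omega>. max (C t \<omega>) c) \<omega>) (\<lambda>s. max (C s \<omega>) c)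
      + (?L + ennreal (cbar / q) * indicator ?B \<omega>)"
  proof (cases "\<omega> \<in> ?B")
    case True
    have "discounted_payout q (ruin_time E U p x C \<omega>) (\<lambda>s. C s \<omega>) \<le> ennreal (cbar / q)"
      using bounds[OF \<omega>] \<open>0 < q\<close> \<open>0 \<le> cbar\<close> by (intro discounted_payout_le) auto
    then show ?thesis using True by (simp add: add_increasing)
  next
    case False
    then have good: "\<And>i. 0 < E i \<omega>" "T + \<delta> < arrival E n \<omega>"
      "\<And>i. i < n \<Longrightarrow> (c - p) * (T + \<delta>) \<le> U i \<omega>"
      "\<And>k. 1 \<le> k \<Longrightarrow> k \<le> n \<Longrightarrow> \<not> (x - w < (\<Sum>i<k. U i \<omega>) \<and> (\<Sum>i<k. U i \<omega>) \<le> x)"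
      using \<omega> by (auto simp: bad_event_def h_def not_le not_less dest: leD)
    have "discounted_payout q (ruin_time E U p x C \<omega>) (\<lambda>s. C s \<omega>)
        \<le> discounted_payout q (ruin_time E U p x (\<lambda>t \<omega>. max (C t \<omega>) c) \<omega>) (\<lambda>s. max (C s \<omega>) c) + ?L"
      by (rule discounted_payout_le_raised_rate[where E = E and U = U and C = C and \<omega> = \<omega> and x = x
            and c = c and n = n, OF admissibleD(2)[OF C \<open>0 < x\<close> \<omega>] bounds[OF \<omega>]
            premium_pos \<open>p < c\<close> \<open>0 < \<delta>\<close> \<open>0 \<le> T\<close> \<open>0 < q\<close> good(1,2,3)
            good(4)[unfolded w_def h_def] \<open>w \<le> x\<close>[unfolded w_def h_def]])
    then show ?thesis by (rule order_trans) (simp add: add_left_mono)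
  qed
qed (rule \<open>0 < q\<close> bad_event_sets)+

lemma Jval_le_raised_explicit:
  fixes c cbar q x T \<delta> :: real
  defines "h \<equiv> T + \<delta>"
  defines "G \<equiv> h * (1 + 2 * h / \<delta>)"
  assumes K: "\<And>a b. a < b \<Longrightarrow> F b - F a \<le> K * (b - a)" and C: "C \<in> admissible M E U p cbar x p"
    and "0 < x" "p < c" "c \<le> cbar" "0 < q" "0 < \<delta>" "0 \<le> T" "(c - p) * G \<le> x"
  shows "Jval M E U p q x C \<le> Jval M E U p q x (\<lambda>t \<omega>. max (C t \<omega>) c)
    + cbar * max (exp (- q * T) / q) \<delta> + cbar / q * erlang_CDF n \<beta> h + (c - p) * (cbar / q * real n * K * (h + G))"
proof -
  have window: "(c - p) * h * (1 + 2 * h / \<delta>) = (c - p) * G" by (simp add: G_def)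
  have "0 < h" "0 < G" using \<open>0 < \<delta>\<close> \<open>0 \<le> T\<close> by (simp_all add: h_def G_def add_pos_pos)
  have "0 \<le> cbar / q" using premium_pos \<open>p < c\<close> \<open>c \<le> cbar\<close> \<open>0 < q\<close> by simp
  have "prob (bad_event n h ((c - p) * h) x ((c - p) * G))
      \<le> erlang_CDF n \<beta> h + real n * K * ((c - p) * h + (c - p) * G)"
    using \<open>p < c\<close> \<open>0 < h\<close> \<open>0 < G\<close> by (intro prob_bad_event K) auto
  then have "cbar / q * prob (bad_event n h ((c - p) * h) x ((c - p) * G))
      \<le> cbar / q * (erlang_CDF n \<beta> h + real n * K * ((c - p) * h + (c - p) * G))"
    using \<open>0 \<le> cbar / q\<close> by (rule mult_left_mono)
  also have "\<dots> = cbar / q * erlang_CDF n \<beta> h + (c - p) * (cbar / q * real n * K * (h + G))"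
    by (simp add: algebra_simps diff_divide_distrib add_divide_distrib)
  finally have bad: "cbar / q * prob (bad_event n h ((c - p) * h) x ((c - p) * G))
      \<le> cbar / q * erlang_CDF n \<beta> h + (c - p) * (cbar / q * real n * K * (h + G))" .
  have "Jval M E U p q x C \<le> Jval M E U p q x (\<lambda>t \<omega>. max (C t \<omega>) c)
      + cbar * max (exp (- q * T) / q) \<delta> + cbar / q * prob (bad_event n h ((c - p) * h) x ((c - p) * G))"
    using Jval_le_raised[where n = n, OF C \<open>0 < x\<close> \<open>p < c\<close> \<open>c \<le> cbar\<close> \<open>0 < q\<close> \<open>0 < \<delta>\<close> \<open>0 \<le> T\<close>,
        folded h_def, unfolded window, OF \<open>(c - p) * G \<le> x\<close>] .
  with bad show ?thesis by linarith
qed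

lemma Jval_le_Jval_max_eventually:
  assumes "0 < q" "p < cbar" "0 < x" "0 < \<epsilon>"
  shows "\<forall>\<^sub>F c in at_right p. \<forall>C\<in>admissible M E U p cbar x p.
    Jval M E U p q x C \<le> Jval M E U p q x (\<lambda>t \<omega>. max (C t \<omega>) c) + \<epsilon>"
proof -
  obtain K where K: "\<And>a b. a < b \<Longrightarrow> F b - F a \<le> K * (b - a)" using F_lipschitz by blast
  have "0 < cbar" using premium_pos \<open>p < cbar\<close> by simp
  define \<delta> where "\<delta> = \<epsilon> / (4 * cbar)"
  have "0 < \<delta>" using \<open>0 < \<epsilon>\<close> \<open>0 < cbar\<close> by (simp add: \<delta>_def)
  obtain T where "0 \<le> T" "exp (- q * T) / q \<le> \<delta>" using exp_tail_le[OF \<open>0 < q\<close> \<open>0 < \<delta>\<close>] .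
  then have L: "cbar * max (exp (- q * T) / q) \<delta> = \<epsilon> / 4"
    using \<open>0 < cbar\<close> by (simp add: max_def \<delta>_def)
  define h where "h = T + \<delta>"
  define G where "G = h * (1 + 2 * h / \<delta>)"
  have "(\<lambda>n. cbar / q * erlang_CDF n \<beta> h) \<longlonglongrightarrow> cbar / q * 0"
    by (intro tendsto_mult tendsto_const erlang_CDF_tendsto_0 beta_pos)
  then have "\<forall>\<^sub>F n in sequentially. cbar / q * erlang_CDF n \<beta> h < \<epsilon> / 4"
    using \<open>0 < \<epsilon>\<close> by (intro order_tendstoD(2)) auto
  then obtain n where n: "cbar / q * erlang_CDF n \<beta> h < \<epsilon> / 4"
    unfolding eventually_sequentially by blast
  have c_minus_p: "((\<lambda>c. c - p) \<longlongrightarrow> 0) (at_right p)"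
    using LIM_zero[OF tendsto_ident_at] .
  have "\<forall>\<^sub>F c in at_right p. c \<in> {p<..<cbar}" by (rule eventually_at_right_real[OF \<open>p < cbar\<close>])
  moreover have "\<forall>\<^sub>F c in at_right p. (c - p) * G < x"
    using order_tendstoD(2)[OF tendsto_mult_left_zero[OF c_minus_p] \<open>0 < x\<close>] .
  moreover have "\<forall>\<^sub>F c in at_right p. (c - p) * (cbar / q * real n * K * (h + G)) < \<epsilon> / 4"
    by (rule order_tendstoD(2)[OF tendsto_mult_left_zero[OF c_minus_p]]) (use \<open>0 < \<epsilon>\<close> in simp)
  ultimately show ?thesis
  proof eventually_elim
    case (elim c)
    then have "p < c" "c \<le> cbar" "(c - p) * G \<le> x" by auto
    show ?case
    proof
      fix C assume C: "C \<in> admissible M E U p cbar x p"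
      have "Jval M E U p q x C \<le> Jval M E U p q x (\<lambda>t \<omega>. max (C t \<omega>) c)
          + cbar * max (exp (- q * T) / q) \<delta> + cbar / q * erlang_CDF n \<beta> h
          + (c - p) * (cbar / q * real n * K * (h + G))"
        unfolding h_def G_def
        by (rule Jval_le_raised_explicit)
          (use K C \<open>0 < x\<close> \<open>p < c\<close> \<open>c \<le> cbar\<close> \<open>0 < q\<close> \<open>0 < \<delta>\<close> \<open>0 \<le> T\<close> \<open>(c - p) * G \<le> x\<close>
            in \<open>simp_all add: h_def G_def\<close>)
      then show "Jval M E U p q x C \<le> Jval M E U p q x (\<lambda>t \<omega>. max (C t \<omega>) c) + \<epsilon>"
        unfolding L using elim n \<open>0 < \<epsilon>\<close> by linarith
    qed
  qed
qed

lemma bdd_above_Jval_admissible: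
  assumes "0 < q" "0 < x" "0 \<le> cbar"
  shows "bdd_above (Jval M E U p q x ` admissible M E U p cbar x c)"
proof (rule bdd_aboveI2)
  fix C assume C: "C \<in> admissible M E U p cbar x c"
  show "Jval M E U p q x C \<le> cbar / q"
    by (rule Jval_le[OF assms(1,3)]) (use admissibleD(5)[OF C \<open>0 < x\<close>] in blast)
qed

lemma Vval_eventually_le:
  assumes "0 < q" "p < cbar" "0 < x"
  shows "\<forall>\<^sub>F c in at_right p. Vval M E U p q cbar x c \<le> Vval M E U p q cbar x p"
  using eventually_at_right_real[OF \<open>p < cbar\<close>]
proof eventually_elim
  case (elim c)
  have "(\<lambda>t \<omega>. c) \<in> admissible M E U p cbar x c" using elim \<open>0 < x\<close> by (intro const_admissible) auto
  moreover have "0 \<le> cbar" using premium_pos \<open>p < cbar\<close> by simp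
  ultimately show ?case
    unfolding Vval_def using assms elim
    by (intro cSUP_subset_mono bdd_above_Jval_admissible admissible_antimono) auto
qed

lemma Vval_eventually_ge:
  assumes "0 < q" "p < cbar" "0 < x" "0 < \<epsilon>"
  shows "\<forall>\<^sub>F c in at_right p. Vval M E U p q cbar x p - \<epsilon> < Vval M E U p q cbar x c"
proof -
  have "0 \<le> cbar" using premium_pos \<open>p < cbar\<close> by simp
  have "(\<lambda>t \<omega>. p) \<in> admissible M E U p cbar x p"
    using \<open>0 < x\<close> \<open>p < cbar\<close> by (intro const_admissible) auto
  then have "admissible M E U p cbar x p \<noteq> {}" by blast
  moreover have "Vval M E U p q cbar x p - \<epsilon> / 2 < Vval M E U p q cbar x p"
    using \<open>0 < \<epsilon>\<close> by simp
  ultimately obtain C where C: "C \<in> admissible M E U p cbar x p"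
    and close: "Vval M E U p q cbar x p - \<epsilon> / 2 < Jval M E U p q x C"
    unfolding Vval_def
    using less_cSUP_iff[OF _ bdd_above_Jval_admissible[OF \<open>0 < q\<close> \<open>0 < x\<close> \<open>0 \<le> cbar\<close>]] by blast
  have "0 < \<epsilon> / 2" using \<open>0 < \<epsilon>\<close> by simp
  show ?thesis
    using Jval_le_Jval_max_eventually[OF assms(1-3) \<open>0 < \<epsilon> / 2\<close>]
      eventually_at_right_real[OF \<open>p < cbar\<close>]
  proof eventually_elim
    case (elim c)
    then have "Jval M E U p q x C \<le> Jval M E U p q x (\<lambda>t \<omega>. max (C t \<omega>) c) + \<epsilon> / 2"
      using C by blast
    also have "Jval M E U p q x (\<lambda>t \<omega>. max (C t \<omega>) c) \<le> Vval M E U p q cbar x c"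
      unfolding Vval_def using elim \<open>0 \<le> cbar\<close>
      by (intro cSUP_upper max_admissible[OF C] bdd_above_Jval_admissible assms) auto
    finally show ?case using close by simp
  qed
qed

end

theorem proposition3p4:
  fixes M :: "'a measure" and \<beta> p q cbar x :: real and F :: "real \<Rightarrow> real"
    and E U :: "nat \<Rightarrow> 'a \<Rightarrow> real"
  assumes "cramer_lundberg M \<beta> p F E U"
    and "0 < q" and "p < cbar" and "0 < x"
  shows "((\<lambda>c. Vval M E U p q cbar x c) \<longlongrightarrow> Vval M E U p q cbar x p) (at_right p)"
proof -
  interpret cramer_lundberg_model M \<beta> p F E U
    using assms(1) by unfold_locales
  show ?thesis
  proof (rule order_tendstoI)
    fix a assume "a < Vval M E U p q cbar x p"
    then show "\<forall>\<^sub>F c in at_right p. a < Vval M E U p q cbar x c"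
      using Vval_eventually_ge[OF assms(2-4), of "Vval M E U p q cbar x p - a"] by simp
  next
    fix a assume "Vval M E U p q cbar x p < a"
    with Vval_eventually_le[OF assms(2-4)]
    show "\<forall>\<^sub>F c in at_right p. Vval M E U p q cbar x c < a"
      by (auto elim: eventually_mono)
  qed
qed

end
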